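(* Consider the dimensionless Maxwell's equations in free space, $\partial_t\mathbf{E}=\nabla\times\mathbf{H}$, $\partial_t\mathbf{H}=-\nabla\times\mathbf{E}$, in their one-dimensional form ($\partial_t E=\partial_x H$, $\partial_t H=\partial_x E$), two-dimensional $\mathrm{TM}_z$ form ($\partial_t H_x=-\partial_y E_z$, $\partial_t H_y=\partial_x E_z$, $\partial_t E_z=\partial_x H_y-\partial_y H_x$), or three-dimensional form, on the unit cube with periodic boundary conditions, discretized on a uniform rectangular grid with spacings $\Delta x$ (and $\Delta y$, $\Delta z$) and time step $\Delta t$. The BFECC scheme based on the central difference scheme is second order accurate. It is stable in the $l^2$ sense if (1) in the one-dimensional case, $\Delta t\le\sqrt3\,\Delta x$; or (2) in the two-dimensional case, $\Delta t\le \dfrac{\sqrt3}{\sqrt{(1/\Delta x)^2+(1/\Delta y)^2}}$; or (3) in the three-dimensional case, $\Delta t\le \dfrac{\sqrt3}{\sqrt{(1/\Delta x)^2+(1/\Delta y)^2+(1/\Delta z)^2}}$.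
   Context: Write the system as $\partial_t\mathbf{u}=\sum_{m}A_m\partial_{x_m}\mathbf{u}$ with constant matrices $A_m$. The central difference scheme is $\mathbf{U}^{n+1}_{\mathbf{j}}=\mathbf{U}^n_{\mathbf{j}}+\sum_m\frac{\Delta t}{2\Delta x_m}A_m(\mathbf{U}^n_{\mathbf{j}+\mathbf{e}_m}-\mathbf{U}^n_{\mathbf{j}-\mathbf{e}_m})$ (e.g. in 1D: $E^{n+1}_j=E^n_j+\frac{\lambda}{2}(H^n_{j+1}-H^n_{j-1})$, $H^{n+1}_j=H^n_j+\frac\lambda2(E^n_{j+1}-E^n_{j-1})$, $\lambda=\Delta t/\Delta x$). Given a linear scheme $\mathcal{L}$, its backward scheme $\mathcal{L}^*$ is $\mathcal{L}$ applied to the time-reversed system (for Maxwell, equivalently $\Delta t\to-\Delta t$ in the scheme), and the BFECC scheme based on $\mathcal{L}$ performs $\tilde{\mathbf{U}}^{n+1}=\mathcal{L}\mathbf{U}^n$, $\tilde{\mathbf{U}}^n=\mathcal{L}^*\tilde{\mathbf{U}}^{n+1}$, $\mathbf{U}^{n+1}=\mathcal{L}(\mathbf{U}^n+\tfrac12(\mathbf{U}^n-\tilde{\mathbf{U}}^n))$. Accuracy order is in the Fourier sense: with equal mesh sizes $h$ and $\Delta t/h$ fixed, a scheme with Fourier symbol matrix $Q(\mathbf{k})$ is $r$-th order accurate iff $Q(\mathbf{k})=e^{\Delta t P(i\mathbf{k})}+O(|\mathbf{k}h|^{r+1})$ as $h\to0$, where $P(i\mathbf{k})=2\pi i\sum_m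 k_mA_m$ is the symbol of the exact evolution. *)

theory Defs
  imports "HOL-Analysis.Analysis"
begin

text \<open>General constant-coefficient system  u_t = sum_m A_m u_{x_m}  with state
  in complex^'s and spatial dimension given by the finite type 'd.
  Grid functions are defined on the integer lattice int^'d.\<close>

type_synonym ('d, 's) gridfun = "int^'d::finite \<Rightarrow> complex^'s::finite"

definition cmat_scale :: "complex \<Rightarrow> complex^'s::finite^'s \<Rightarrow> complex^'s^'s" where
  "cmat_scale c M = (\<chi> a b. c * M$a$b)"

definition cvec_scale :: "complex \<Rightarrow> complex^'s::finite \<Rightarrow> complex^'s" where
  "cvec_scale c v = (\<chi> a. c * v$a)"

definition mpow :: "complex^'s::finite^'s \<Rightarrow> nat \<Rightarrow> complex^'s^'s" where
  "mpow M n = (((**) M) ^^ n) (mat 1)"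

definition mexp :: "complex^'s::finite^'s \<Rightarrow> complex^'s^'s" where
  "mexp M = (\<Sum>n. (1 / fact n) *\<^sub>R mpow M n)"

definition central ::
  "('d::finite \<Rightarrow> complex^'s^'s) \<Rightarrow> real \<Rightarrow> ('d \<Rightarrow> real) \<Rightarrow> ('d,'s) gridfun \<Rightarrow> ('d,'s) gridfun" where
  "central A dt dx U = (\<lambda>j. U j + (\<Sum>m\<in>UNIV. (dt / (2 * dx m)) *\<^sub>R
        (A m *v (U (j + axis m 1) - U (j - axis m 1)))))"

definition central_backward ::
  "('d::finite \<Rightarrow> complex^'s^'s) \<Rightarrow> real \<Rightarrow> ('d \<Rightarrow> real) \<Rightarrow> ('d,'s) gridfun \<Rightarrow> ('d,'s) gridfun" where
  "central_backward A dt dx = central (\<lambda>m. - A m) dt dx"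

definition bfecc ::
  "('d::finite \<Rightarrow> complex^'s^'s) \<Rightarrow> real \<Rightarrow> ('d \<Rightarrow> real) \<Rightarrow> ('d,'s) gridfun \<Rightarrow> ('d,'s) gridfun" where
  "bfecc A dt dx U =
     (let Ut1 = central A dt dx U;
          Ut0 = central_backward A dt dx Ut1
      in central A dt dx (\<lambda>j. U j + (1/2) *\<^sub>R (U j - Ut0 j)))"

definition exact_symbol :: "('d::finite \<Rightarrow> complex^'s^'s) \<Rightarrow> real^'d \<Rightarrow> complex^'s^'s" where
  "exact_symbol A k = cmat_scale (2 * pi * \<i>) (\<Sum>m\<in>UNIV. k$m *\<^sub>R A m)"

definition plane_wave :: "real \<Rightarrow> real^'d::finite \<Rightarrow> complex^'s \<Rightarrow> ('d,'s) gridfun" where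
  "plane_wave h k v = (\<lambda>j. cvec_scale (exp (2 * pi * \<i> * of_real (\<Sum>m\<in>UNIV. k$m * h * of_int (j$m)))) v)"

text \<open>Accuracy of order r in the Fourier sense: with equal mesh sizes h and
  dt/h = nu fixed, the Fourier symbol Q(k) (the matrix by which the scheme
  multiplies a plane wave with wave vector k) satisfies
  Q(k) = exp(dt P(ik)) + O(|k h|^(r+1)) as h -> 0.  Q(k) v is the value at
  the grid point 0 of the scheme applied to the plane wave with amplitude v.\<close>
definition fourier_accurate ::
  "nat \<Rightarrow> (('d::finite \<Rightarrow> complex^'s^'s) \<Rightarrow> real \<Rightarrow> ('d \<Rightarrow> real) \<Rightarrow> ('d,'s) gridfun \<Rightarrow> ('d,'s) gridfun)
      \<Rightarrow> ('d \<Rightarrow> complex^'s^'s) \<Rightarrow> bool" where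
  "fourier_accurate r S A \<longleftrightarrow>
     (\<forall>\<nu>>0. \<exists>C \<delta>. \<delta> > 0 \<and>
        (\<forall>h k v. h > 0 \<longrightarrow> norm (h *\<^sub>R k) \<le> \<delta> \<longrightarrow>
           norm (S A (\<nu> * h) (\<lambda>m. h) (plane_wave h k v) 0
                 - mexp (cmat_scale (of_real (\<nu> * h)) (exact_symbol A k)) *v v)
             \<le> C * norm (h *\<^sub>R k) ^ (r + 1) * norm v))"

text \<open>Periodic grid on the unit cube: N$m points in direction m, spacing 1/N$m.\<close>
definition mesh :: "nat^'d::finite \<Rightarrow> 'd \<Rightarrow> real" where
  "mesh N m = 1 / real (N$m)"

definition periodic :: "nat^'d::finite \<Rightarrow> ('d,'s::finite) gridfun \<Rightarrow> bool" where
  "periodic N U \<longleftrightarrow> (\<forall>j m. U (j + axis m (int (N$m))) = U j)"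

definition cell_box :: "nat^'d::finite \<Rightarrow> (int^'d) set" where
  "cell_box N = {j. \<forall>m. 0 \<le> j$m \<and> j$m < int (N$m)}"

definition l2norm :: "nat^'d::finite \<Rightarrow> ('d,'s::finite) gridfun \<Rightarrow> real" where
  "l2norm N U = sqrt ((\<Prod>m\<in>UNIV. mesh N m) * (\<Sum>j\<in>cell_box N. (norm (U j))\<^sup>2))"

text \<open>Stability in the l^2 sense (Lax--Richtmyer / Strikwerda, one-step scheme)
  in a stability region Lambda of (grid, time step) pairs: for every T > 0 there
  is C such that ||U^n|| <= C ||U^0|| whenever 0 <= n dt <= T.\<close>
definition l2_stable ::
  "(('d::finite \<Rightarrow> complex^'s^'s) \<Rightarrow> real \<Rightarrow> ('d \<Rightarrow> real) \<Rightarrow> ('d,'s) gridfun \<Rightarrow> ('d,'s) gridfun)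
      \<Rightarrow> ('d \<Rightarrow> complex^'s^'s) \<Rightarrow> ((nat^'d) \<times> real) set \<Rightarrow> bool" where
  "l2_stable S A \<Lambda> \<longleftrightarrow>
     (\<forall>T>0. \<exists>C. \<forall>N dt n U. (N, dt) \<in> \<Lambda> \<longrightarrow> periodic N U \<longrightarrow> real n * dt \<le> T \<longrightarrow>
         l2norm N ((S A dt (mesh N) ^^ n) U) \<le> C * l2norm N U)"

text \<open>Maxwell systems.  1D: state (E, H) = components (0, 1);
  E_t = H_x, H_t = E_x.\<close>
definition maxwell1 :: "1 \<Rightarrow> complex^2^2" where
  "maxwell1 m = (\<chi> a b. if a \<noteq> b then 1 else 0)"

text \<open>2D TM_z: state (H_x, H_y, E_z) = components (0, 1, 2); directions x = 0, y = 1.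
  (H_x)_t = -(E_z)_y, (H_y)_t = (E_z)_x, (E_z)_t = (H_y)_x - (H_x)_y.\<close>
definition maxwell2 :: "2 \<Rightarrow> complex^3^3" where
  "maxwell2 m = (\<chi> a b.
     if m = 0 then (if (a = 1 \<and> b = 2) \<or> (a = 2 \<and> b = 1) then 1 else 0)
     else (if (a = 0 \<and> b = 2) \<or> (a = 2 \<and> b = 0) then -1 else 0))"

definition levi_civita :: "3 \<Rightarrow> 3 \<Rightarrow> 3 \<Rightarrow> complex" where
  "levi_civita a b c =
     (if (a, b, c) \<in> {(0,1,2), (1,2,0), (2,0,1)} then 1
      else if (a, b, c) \<in> {(0,2,1), (2,1,0), (1,0,2)} then -1 else 0)"

text \<open>3D: state component (0, a) = E_a, (1, a) = H_a; directions 0, 1, 2.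
  E_t = curl H, H_t = - curl E, with (curl F)_a = sum_{m,b} eps_{a m b} d_m F_b.\<close>
definition maxwell3 :: "3 \<Rightarrow> complex^(2 \<times> 3)^(2 \<times> 3)" where
  "maxwell3 m = (\<chi> i j.
     if fst i = 0 \<and> fst j = 1 then levi_civita (snd i) m (snd j)
     else if fst i = 1 \<and> fst j = 0 then - levi_civita (snd i) m (snd j) else 0)"

end

(*
  Write the central scheme as I + D with D = sum_m c_m A_m delta_m, where c_m = dt/(2 dx_m) and
  delta_m is the centred difference in direction m; then BFECC is (I + D)(I + D^2/2).

  Stability: for Maxwell's equations the A_m are hermitian, so D is skew-adjoint on periodic grid
  functions and ||(I + D)(I + D^2/2) u||^2 = ||u||^2 - 3/4 ||D^2 u||^2 + 1/4 ||D^3 u||^2.  The scheme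
  is therefore l^2-nonexpansive as soon as ||D v||^2 <= 3 ||v||^2, and for the Maxwell systems
  ||D v||^2 <= 4 (sum_m c_m^2) ||v||^2 = dt^2 (sum_m 1/dx_m^2) ||v||^2, which is the CFL condition.

  Accuracy: on a plane wave with phases theta_m = 2 pi k_m h the scheme multiplies the amplitude by
  (I + iS)(I - S^2/2) with S = nu sum_m sin(theta_m) A_m, while the exact evolution is exp(iT) with
  T = nu sum_m theta_m A_m; both agree with I + iT - T^2/2 up to O(|k h|^3).
*)

theory Submission
  imports Defs
begin

subsection \<open>Periodic grid functions\<close>

text \<open>Unlike \<^const>\<open>periodic\<close>, this applies to grid functions with any codomain, e.g. to
  single components and to pointwise inner products.\<close>

definition grid_periodic :: "nat^'d::finite \<Rightarrow> (int^'d \<Rightarrow> 'a) \<Rightarrow> bool" where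
  "grid_periodic N f \<longleftrightarrow> (\<forall>j m. f (j + axis m (int (N$m))) = f j)"

lemma periodic_iff_grid_periodic: "periodic N U \<longleftrightarrow> grid_periodic N U"
  by (simp add: periodic_def grid_periodic_def)

lemma grid_periodic_compose: "grid_periodic N f \<Longrightarrow> grid_periodic N (\<lambda>j. H (f j))"
  unfolding grid_periodic_def by simp

lemma grid_periodic_compose2:
  "grid_periodic N f \<Longrightarrow> grid_periodic N g \<Longrightarrow> grid_periodic N (\<lambda>j. H (f j) (g j))"
  unfolding grid_periodic_def by simp

lemma grid_periodic_translate: "grid_periodic N f \<Longrightarrow> grid_periodic N (\<lambda>j. f (j + c))"
  unfolding grid_periodic_def by (metis add.commute add.left_commute)

lemma axis_add: "axis m (a + b) = axis m a + (axis m b :: 'a::comm_monoid_add^'d::finite)"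
  by (simp add: vec_eq_iff axis_def)

lemma grid_periodic_axis_multiple:
  assumes "grid_periodic N f"
  shows "f (j + axis m (t * int (N$m))) = f j"
proof (induction t arbitrary: j rule: int_induct[where k=0])
  case base
  show ?case by (simp add: axis_def zero_vec_def[symmetric])
next
  case (step1 i)
  have "f (j + axis m ((i + 1) * int (N$m))) = f ((j + axis m (i * int (N$m))) + axis m (int (N$m)))"
    by (simp add: algebra_simps axis_add)
  also have "\<dots> = f j" using assms step1 by (simp add: grid_periodic_def)
  finally show ?case .
next
  case (step2 i)
  have "f (j + axis m ((i - 1) * int (N$m)))
      = f ((j + axis m ((i - 1) * int (N$m))) + axis m (int (N$m)))"
    using assms by (simp add: grid_periodic_def)
  also have "\<dots> = f (j + axis m (i * int (N$m)))"
    by (simp add: add.assoc axis_add[symmetric] algebra_simps)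
  finally show ?case using step2 by simp
qed

lemma grid_periodic_mod:
  assumes "grid_periodic N f"
  shows "f (\<chi> m. j$m mod int (N$m)) = f j"
proof -
  have "f (\<chi> m. if m \<in> S then j$m mod int (N$m) else j$m) = f j" if "finite S" for S
    using that
  proof (induction S rule: finite_induct)
    case (insert a S)
    have "(\<chi> m. if m \<in> insert a S then j$m mod int (N$m) else j$m)
        = (\<chi> m. if m \<in> S then j$m mod int (N$m) else j$m)
            + axis a (- (j$a div int (N$a)) * int (N$a))"
      using insert(2) by (auto simp: vec_eq_iff axis_def minus_div_mult_eq_mod[symmetric])
    then show ?case
      using grid_periodic_axis_multiple[OF assms, of _ a "- (j$a div int (N$a))"] insert(3)
      by simp
  qed simp
  from this[of UNIV] show ?thesis by simp
qed

lemma sum_cell_box_translate: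
  fixes f :: "int^'d::finite \<Rightarrow> 'a::comm_monoid_add"
  assumes f: "grid_periodic N f" and N: "\<forall>m. 0 < N$m"
  shows "(\<Sum>j\<in>cell_box N. f (j + c)) = (\<Sum>j\<in>cell_box N. f j)"
proof -
  define r where "r j = (\<chi> m. j$m mod int (N$m))" for j :: "int^'d"
  have "(\<Sum>j\<in>cell_box N. f (j + c)) = (\<Sum>j\<in>cell_box N. f (r (j + c)))"
    by (simp only: r_def grid_periodic_mod[OF f])
  also have "\<dots> = (\<Sum>j\<in>cell_box N. f j)"
    by (rule sum.reindex_bij_witness[where j="\<lambda>a. r (a + c)" and i="\<lambda>b. r (b - c)"])
      (use N in \<open>auto simp: r_def cell_box_def vec_eq_iff mod_diff_left_eq mod_add_left_eq\<close>)
  finally show ?thesis .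
qed

subsection \<open>The central difference operator\<close>

definition central_diff ::
  "('d::finite \<Rightarrow> complex^'s::finite^'s) \<Rightarrow> ('d \<Rightarrow> real) \<Rightarrow> ('d,'s) gridfun \<Rightarrow> ('d,'s) gridfun" where
  "central_diff A c U = (\<lambda>j. \<Sum>m\<in>UNIV. c m *\<^sub>R (A m *v (U (j + axis m 1) - U (j - axis m 1))))"

lemma cmatrix_vector_mult_scaleR: "(M::complex^'n::finite^'m::finite) *v (r *\<^sub>R x) = r *\<^sub>R (M *v x)"
  by (simp add: vec_eq_iff matrix_vector_mult_def scaleR_sum_right)

lemma uminus_cmatrix_vector_mult: "(- (M::complex^'n::finite^'m::finite)) *v x = - (M *v x)"
  by (simp add: vec_eq_iff matrix_vector_mult_def sum_negf)

lemma central_eq_central_diff: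
  "central A dt dx U = (\<lambda>j. U j + central_diff A (\<lambda>m. dt / (2 * dx m)) U j)"
  by (simp add: central_def central_diff_def)

lemma central_backward_eq_central_diff:
  "central_backward A dt dx U = (\<lambda>j. U j - central_diff A (\<lambda>m. dt / (2 * dx m)) U j)"
  by (simp add: central_backward_def central_def central_diff_def uminus_cmatrix_vector_mult sum_negf)

lemma central_diff_add:
  "central_diff A c (\<lambda>j. U j + V j) = (\<lambda>j. central_diff A c U j + central_diff A c V j)"
  unfolding central_diff_def
  by (rule ext, subst sum.distrib[symmetric], rule sum.cong) (simp_all add: algebra_simps)

lemma central_diff_scaleR:
  "central_diff A c (\<lambda>j. r *\<^sub>R U j) = (\<lambda>j. r *\<^sub>R central_diff A c U j)"
  by (simp add: central_diff_def cmatrix_vector_mult_scaleR scaleR_sum_right mult.commute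
      scaleR_diff_right[symmetric] matrix_vector_mult_diff_distrib[symmetric])

text \<open>The backward scheme is \<open>I - D\<close>, so the corrected initial value is \<open>U + D\<^sup>2U/2\<close>.\<close>

lemma bfecc_eq_central_diff:
  "bfecc A dt dx U =
    (let D = central_diff A (\<lambda>m. dt / (2 * dx m)); W = (\<lambda>j. U j + (1/2) *\<^sub>R D (D U) j)
     in (\<lambda>j. W j + D W j))"
proof -
  define D where "D = central_diff A (\<lambda>m. dt / (2 * dx m))"
  have "D (\<lambda>j. U j + D U j) = (\<lambda>j. D U j + D (D U) j)"
    by (simp add: D_def central_diff_add)
  then have "central_backward A dt dx (\<lambda>j. U j + D U j) = (\<lambda>j. U j - D (D U) j)"
    unfolding central_backward_eq_central_diff D_def[symmetric] by simp
  then show ?thesis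
    unfolding bfecc_def Let_def central_eq_central_diff D_def[symmetric] by simp
qed

lemma grid_periodic_central_diff:
  assumes "grid_periodic N U"
  shows "grid_periodic N (central_diff A c U)"
proof -
  have "U (j + axis m (int (N$m)) + e) = U (j + e)" "U (j + axis m (int (N$m)) - e) = U (j - e)"
    for j m e
    using assms unfolding grid_periodic_def by (metis add.commute add.left_commute add_diff_eq)+
  then show ?thesis
    unfolding grid_periodic_def central_diff_def diff_conv_add_uminus by simp
qed

definition grid_inner :: "nat^'d::finite \<Rightarrow> ('d,'s::finite) gridfun \<Rightarrow> ('d,'s) gridfun \<Rightarrow> real" where
  "grid_inner N U V = (\<Sum>j\<in>cell_box N. inner (U j) (V j))"

lemma grid_inner_add_left: "grid_inner N (\<lambda>j. U j + V j) W = grid_inner N U W + grid_inner N V W"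
  by (simp add: grid_inner_def inner_add_left sum.distrib)

lemma grid_inner_add_right: "grid_inner N W (\<lambda>j. U j + V j) = grid_inner N W U + grid_inner N W V"
  by (simp add: grid_inner_def inner_add_right sum.distrib)

lemma grid_inner_scaleR_left: "grid_inner N (\<lambda>j. r *\<^sub>R U j) W = r * grid_inner N U W"
  by (simp add: grid_inner_def sum_distrib_left)

lemma grid_inner_scaleR_right: "grid_inner N W (\<lambda>j. r *\<^sub>R U j) = r * grid_inner N W U"
  by (simp add: grid_inner_def sum_distrib_left)

lemma grid_inner_commute: "grid_inner N U V = grid_inner N V U"
  by (simp add: grid_inner_def inner_commute)

lemma grid_inner_self_nonneg: "0 \<le> grid_inner N U U"
  by (simp add: grid_inner_def sum_nonneg)

lemma l2norm_eq_grid_inner: "l2norm N U = sqrt ((\<Prod>m\<in>UNIV. mesh N m) * grid_inner N U U)"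
  by (simp add: l2norm_def grid_inner_def power2_norm_eq_inner)

lemma complex_inner_eq_Re: "inner (a::complex) b = Re (a * cnj b)"
  by (simp add: inner_complex_def)

definition hermitian :: "complex^'s::finite^'s \<Rightarrow> bool" where
  "hermitian M \<longleftrightarrow> (\<forall>a b. cnj (M$a$b) = M$b$a)"

lemma inner_hermitian:
  assumes "hermitian M"
  shows "inner (M *v x) y = inner x (M *v y)"
proof -
  have "inner (M *v x) y = (\<Sum>a\<in>UNIV. \<Sum>b\<in>UNIV. Re (M$a$b * x$b * cnj (y$a)))"
    by (simp add: inner_vec_def complex_inner_eq_Re matrix_vector_mult_def sum_distrib_right)
  also have "\<dots> = (\<Sum>b\<in>UNIV. \<Sum>a\<in>UNIV. Re (M$a$b * x$b * cnj (y$a)))"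
    by (rule sum.swap)
  also have "\<dots> = (\<Sum>b\<in>UNIV. Re (x$b * cnj (\<Sum>a\<in>UNIV. M$b$a * y$a)))"
  proof (rule sum.cong[OF refl])
    fix b
    have "cnj (M$b$a) = M$a$b" for a
      using assms unfolding hermitian_def by blast
    then show "(\<Sum>a\<in>UNIV. Re (M$a$b * x$b * cnj (y$a))) = Re (x$b * cnj (\<Sum>a\<in>UNIV. M$b$a * y$a))"
      by (simp add: sum_distrib_left mult.commute mult.left_commute)
  qed
  also have "\<dots> = inner x (M *v y)"
    by (simp add: inner_vec_def complex_inner_eq_Re matrix_vector_mult_def)
  finally show ?thesis .
qed

lemma sum_cell_box_inner_difference:
  fixes U V :: "('d::finite,'s::finite) gridfun"
  assumes M: "hermitian M" and U: "grid_periodic N U" and V: "grid_periodic N V"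
    and N: "\<forall>m. 0 < N$m"
  shows "(\<Sum>j\<in>cell_box N. inner (M *v (U (j + e) - U (j - e))) (V j)) =
         - (\<Sum>j\<in>cell_box N. inner (U j) (M *v (V (j + e) - V (j - e))))"
proof -
  have shift: "(\<Sum>j\<in>cell_box N. inner (U (j + d)) (M *v V j))
      = (\<Sum>j\<in>cell_box N. inner (U j) (M *v V (j - d)))" for d
  proof -
    have "grid_periodic N (\<lambda>j. inner (U j) (M *v V (j + - d)))"
      by (rule grid_periodic_compose2[OF U grid_periodic_translate[OF V]])
    from sum_cell_box_translate[OF this N, of d] show ?thesis by simp
  qed
  from shift[of e] shift[of "- e"] show ?thesis
    by (simp add: inner_hermitian[OF M] matrix_vector_mult_diff_distrib inner_diff_left
        inner_diff_right sum_subtractf)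
qed

lemma grid_inner_central_diff_skew:
  assumes A: "\<forall>m. hermitian (A m)" and U: "grid_periodic N U" and V: "grid_periodic N V"
    and N: "\<forall>m. 0 < N$m"
  shows "grid_inner N (central_diff A c U) V = - grid_inner N U (central_diff A c V)"
proof -
  have "grid_inner N (central_diff A c U) V
      = (\<Sum>m\<in>UNIV. c m * (\<Sum>j\<in>cell_box N.
           inner (A m *v (U (j + axis m 1) - U (j - axis m 1))) (V j)))"
    unfolding grid_inner_def central_diff_def
    by (simp add: inner_sum_left sum_distrib_left) (rule sum.swap)
  also have "\<dots> = - (\<Sum>m\<in>UNIV. c m * (\<Sum>j\<in>cell_box N.
           inner (U j) (A m *v (V (j + axis m 1) - V (j - axis m 1)))))"
    using sum_cell_box_inner_difference[OF _ U V N] A by (simp add: sum_negf)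
  also have "\<dots> = - grid_inner N U (central_diff A c V)"
    unfolding grid_inner_def central_diff_def
    by (simp add: inner_sum_right sum_distrib_left) (rule sum.swap)
  finally show ?thesis .
qed

subsection \<open>Energy estimate and stability\<close>

text \<open>With \<open>u\<^sub>k = D\<^sup>ku\<close> and \<open>D\<close> skew-adjoint, all odd cross terms vanish and
  \<open>\<langle>u\<^sub>k, u\<^sub>k\<^sub>+\<^sub>2\<rangle> = - \<parallel>u\<^sub>k\<^sub>+\<^sub>1\<parallel>\<^sup>2\<close>.\<close>

lemma grid_inner_bfecc_step:
  fixes A :: "'d::finite \<Rightarrow> complex^'s::finite^'s" and c :: "'d \<Rightarrow> real"
  assumes A: "\<forall>m. hermitian (A m)" and N: "\<forall>m. 0 < N$m" and u: "grid_periodic N u"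
  defines "D \<equiv> central_diff A c"
  defines "W \<equiv> (\<lambda>j. u j + (1/2) *\<^sub>R D (D u) j)"
  shows "grid_inner N (\<lambda>j. W j + D W j) (\<lambda>j. W j + D W j)
       = grid_inner N u u - 3/4 * grid_inner N (D (D u)) (D (D u))
         + 1/4 * grid_inner N (D (D (D u))) (D (D (D u)))"
proof -
  define u1 where "u1 = D u"
  define u2 where "u2 = D u1"
  define u3 where "u3 = D u2"
  have p1: "grid_periodic N u1" and p2: "grid_periodic N u2"
    unfolding u1_def u2_def D_def by (intro grid_periodic_central_diff u)+
  have pW: "grid_periodic N W"
    unfolding W_def u1_def[symmetric] u2_def[symmetric]
    by (rule grid_periodic_compose2[OF u grid_periodic_compose[OF p2]])
  have skew: "grid_inner N (D x) y = - grid_inner N x (D y)"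
    if "grid_periodic N x" "grid_periodic N y" for x y
    unfolding D_def by (rule grid_inner_central_diff_skew[OF A that N])
  have W: "W = (\<lambda>j. u j + (1/2) *\<^sub>R u2 j)"
    unfolding W_def u1_def u2_def ..
  have DW: "D W = (\<lambda>j. u1 j + (1/2) *\<^sub>R u3 j)"
    unfolding W_def D_def central_diff_add central_diff_scaleR u1_def u2_def u3_def D_def ..
  have cross: "grid_inner N W (D W) = 0"
    using skew[OF pW pW] grid_inner_commute[of N W "D W"] by simp
  have e1: "grid_inner N u u2 = - grid_inner N u1 u1"
    using skew[OF u p1] grid_inner_commute[of N u u2] unfolding u2_def u1_def by simp
  have e2: "grid_inner N u1 u3 = - grid_inner N u2 u2"
    using skew[OF p1 p2] grid_inner_commute[of N u1 u3] unfolding u3_def u2_def by simp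
  have "grid_inner N W W = grid_inner N u u - grid_inner N u1 u1 + 1/4 * grid_inner N u2 u2"
    unfolding W grid_inner_add_left grid_inner_add_right grid_inner_scaleR_left
      grid_inner_scaleR_right e1 grid_inner_commute[of N u2 u] by simp
  moreover have "grid_inner N (D W) (D W)
      = grid_inner N u1 u1 - grid_inner N u2 u2 + 1/4 * grid_inner N u3 u3"
    unfolding DW grid_inner_add_left grid_inner_add_right grid_inner_scaleR_left
      grid_inner_scaleR_right e2 grid_inner_commute[of N u3 u1] by simp
  ultimately show ?thesis
    unfolding grid_inner_add_left grid_inner_add_right grid_inner_commute[of N "D W" W] cross
    by (simp add: u1_def u2_def u3_def)
qed

lemma bfecc_energy_le:
  fixes A :: "'d::finite \<Rightarrow> complex^'s::finite^'s"
  assumes A: "\<forall>m. hermitian (A m)" and N: "\<forall>m. 0 < N$m" and u: "grid_periodic N u"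
    and bound: "\<And>v. grid_periodic N v \<Longrightarrow>
      grid_inner N (central_diff A (\<lambda>m. dt / (2 * dx m)) v) (central_diff A (\<lambda>m. dt / (2 * dx m)) v)
        \<le> 3 * grid_inner N v v"
  shows "grid_periodic N (bfecc A dt dx u)"
    and "grid_inner N (bfecc A dt dx u) (bfecc A dt dx u) \<le> grid_inner N u u"
proof -
  define D where "D = central_diff A (\<lambda>m. dt / (2 * dx m))"
  have pD: "grid_periodic N (D v)" if "grid_periodic N v" for v
    unfolding D_def by (rule grid_periodic_central_diff[OF that])
  have B: "bfecc A dt dx u = (\<lambda>j. u j + (1/2) *\<^sub>R D (D u) j + D (\<lambda>j. u j + (1/2) *\<^sub>R D (D u) j) j)"
    unfolding bfecc_eq_central_diff D_def Let_def ..
  have "grid_periodic N (\<lambda>j. u j + (1/2) *\<^sub>R D (D u) j)"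
    using u pD[OF pD[OF u]] unfolding grid_periodic_def by simp
  then show "grid_periodic N (bfecc A dt dx u)"
    unfolding B using pD unfolding grid_periodic_def by simp
  have "grid_inner N (D (D (D u))) (D (D (D u))) \<le> 3 * grid_inner N (D (D u)) (D (D u))"
    unfolding D_def by (intro bound pD[unfolded D_def] u)
  then show "grid_inner N (bfecc A dt dx u) (bfecc A dt dx u) \<le> grid_inner N u u"
    unfolding B grid_inner_bfecc_step[OF A N u, where c="\<lambda>m. dt / (2 * dx m)", folded D_def] by simp
qed

lemma l2_stable_bfecc_if_central_diff_bounded:
  fixes A :: "'d::finite \<Rightarrow> complex^'s::finite^'s"
  assumes A: "\<forall>m. hermitian (A m)"
    and \<Lambda>: "\<And>N dt. (N, dt) \<in> \<Lambda> \<Longrightarrow> (\<forall>m. 0 < N$m) \<and>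
      (\<forall>v. grid_periodic N v \<longrightarrow>
        grid_inner N (central_diff A (\<lambda>m. dt / (2 * mesh N m)) v)
          (central_diff A (\<lambda>m. dt / (2 * mesh N m)) v) \<le> 3 * grid_inner N v v)"
  shows "l2_stable bfecc A \<Lambda>"
  unfolding l2_stable_def
proof (intro allI impI exI)
  fix N dt n and U :: "('d,'s) gridfun"
  assume "(N, dt) \<in> \<Lambda>" and U: "periodic N U"
  with \<Lambda> have N: "\<forall>m. 0 < N$m" by blast
  let ?B = "bfecc A dt (mesh N)"
  have "grid_periodic N ((?B ^^ n) U) \<and> grid_inner N ((?B ^^ n) U) ((?B ^^ n) U) \<le> grid_inner N U U"
  proof (induction n)
    case 0
    then show ?case using U by (simp add: periodic_iff_grid_periodic)
  next
    case (Suc n)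
    have "grid_periodic N (?B ((?B ^^ n) U)) \<and>
        grid_inner N (?B ((?B ^^ n) U)) (?B ((?B ^^ n) U)) \<le> grid_inner N ((?B ^^ n) U) ((?B ^^ n) U)"
      using bfecc_energy_le[OF A N, of "(?B ^^ n) U" dt "mesh N"] Suc \<Lambda>[OF \<open>(N, dt) \<in> \<Lambda>\<close>]
      by blast
    with Suc show ?case by auto
  qed
  moreover have "0 \<le> (\<Prod>m\<in>UNIV. mesh N m)"
    by (simp add: prod_nonneg mesh_def)
  ultimately show "l2norm N ((?B ^^ n) U) \<le> 1 * l2norm N U"
    unfolding l2norm_eq_grid_inner by (simp add: mult_left_mono)
qed

lemma l2_stable_subset: "l2_stable S A \<Lambda> \<Longrightarrow> \<Lambda>' \<subseteq> \<Lambda> \<Longrightarrow> l2_stable S A \<Lambda>'"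
  unfolding l2_stable_def by blast

lemma l2_stable_bfecc_cfl:
  fixes A :: "'d::finite \<Rightarrow> complex^'s::finite^'s"
  assumes A: "\<forall>m. hermitian (A m)"
    and bound: "\<And>N c v. \<forall>m. 0 < N$m \<Longrightarrow> grid_periodic N v \<Longrightarrow>
      grid_inner N (central_diff A c v) (central_diff A c v)
        \<le> 4 * (\<Sum>m\<in>UNIV. (c m)\<^sup>2) * grid_inner N v v"
  shows "l2_stable bfecc A
    {(N, dt). (\<forall>m. 0 < N$m) \<and> 0 < dt \<and> dt \<le> sqrt 3 / sqrt (\<Sum>m\<in>UNIV. (1 / mesh N m)\<^sup>2)}"
proof (rule l2_stable_bfecc_if_central_diff_bounded[OF A], safe)
  fix N :: "nat^'d" and dt :: real and v :: "('d,'s) gridfun"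
  assume N: "\<forall>m. 0 < N$m" and dt: "0 < dt" "dt \<le> sqrt 3 / sqrt (\<Sum>m\<in>UNIV. (1 / mesh N m)\<^sup>2)"
    and v: "grid_periodic N v"
  define s where "s = (\<Sum>m\<in>UNIV. (1 / mesh N m)\<^sup>2)"
  have s: "0 < s"
    unfolding s_def using N by (intro sum_pos) (simp_all add: mesh_def)
  have "dt * sqrt s \<le> sqrt 3"
    using dt s by (simp add: s_def pos_le_divide_eq)
  then have "(dt * sqrt s)\<^sup>2 \<le> (sqrt 3)\<^sup>2"
    using dt s by (intro power_mono) auto
  then have "4 * (\<Sum>m\<in>UNIV. (dt / (2 * mesh N m))\<^sup>2) \<le> 3"
    using s by (simp add: s_def power_mult_distrib sum_distrib_left power_divide)
  then show "grid_inner N (central_diff A (\<lambda>m. dt / (2 * mesh N m)) v)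
      (central_diff A (\<lambda>m. dt / (2 * mesh N m)) v) \<le> 3 * grid_inner N v v"
    using bound[OF N v] grid_inner_self_nonneg[of N v] by (meson mult_right_mono order_trans)
qed

subsection \<open>Bounds on the central difference for the Maxwell systems\<close>

definition grid_delta :: "'d \<Rightarrow> (int^'d::finite \<Rightarrow> 'a::ab_group_add) \<Rightarrow> int^'d \<Rightarrow> 'a" where
  "grid_delta m f j = f (j + axis m 1) - f (j - axis m 1)"

lemma central_diff_component:
  "central_diff A c v j $ a
     = (\<Sum>m\<in>UNIV. of_real (c m) * (\<Sum>b\<in>UNIV. A m $ a $ b * grid_delta m (\<lambda>j. v j $ b) j))"
  unfolding central_diff_def sum_component vector_scaleR_component
  by (simp add: grid_delta_def matrix_vector_mult_def scaleR_conv_of_real)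

lemma grid_inner_self_eq: "grid_inner N v v = (\<Sum>j\<in>cell_box N. \<Sum>a\<in>UNIV. (cmod (v j $ a))\<^sup>2)"
  by (simp add: grid_inner_def inner_vec_def power2_norm_eq_inner)

lemma sum_grid_delta_sq_le:
  fixes f :: "int^'d::finite \<Rightarrow> complex"
  assumes f: "grid_periodic N f" and N: "\<forall>m. 0 < N$m"
  shows "(\<Sum>j\<in>cell_box N. (cmod (grid_delta m f j))\<^sup>2) \<le> 4 * (\<Sum>j\<in>cell_box N. (cmod (f j))\<^sup>2)"
proof -
  have shift: "(\<Sum>j\<in>cell_box N. (cmod (f (j + e)))\<^sup>2) = (\<Sum>j\<in>cell_box N. (cmod (f j))\<^sup>2)" for e
    by (rule sum_cell_box_translate[OF grid_periodic_compose[OF f] N])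
  have shift': "(\<Sum>j\<in>cell_box N. (cmod (f (j - e)))\<^sup>2) = (\<Sum>j\<in>cell_box N. (cmod (f j))\<^sup>2)" for e
    using shift[of "- e"] by simp
  have "(cmod (a - b))\<^sup>2 \<le> 2 * (cmod a)\<^sup>2 + 2 * (cmod b)\<^sup>2" for a b :: complex
  proof -
    have "(cmod (a - b))\<^sup>2 \<le> (cmod a + cmod b)\<^sup>2"
      by (simp add: power_mono norm_triangle_ineq4)
    also have "\<dots> \<le> 2 * (cmod a)\<^sup>2 + 2 * (cmod b)\<^sup>2"
      using sum_squares_bound[of "cmod a" "cmod b"] by (simp add: power2_eq_square algebra_simps)
    finally show ?thesis .
  qed
  then have "(\<Sum>j\<in>cell_box N. (cmod (grid_delta m f j))\<^sup>2)
      \<le> (\<Sum>j\<in>cell_box N. 2 * (cmod (f (j + axis m 1)))\<^sup>2 + 2 * (cmod (f (j - axis m 1)))\<^sup>2)"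
    unfolding grid_delta_def by (intro sum_mono) simp
  also have "\<dots> = 4 * (\<Sum>j\<in>cell_box N. (cmod (f j))\<^sup>2)"
    by (simp add: sum.distrib sum_distrib_left[symmetric] shift shift')
  finally show ?thesis .
qed

text \<open>Summation by parts in both directions: the difference operators commute and are skew.\<close>

lemma sum_grid_delta_swap:
  fixes f g :: "int^'d::finite \<Rightarrow> complex"
  assumes f: "grid_periodic N f" and g: "grid_periodic N g" and N: "\<forall>m. 0 < N$m"
  shows "(\<Sum>j\<in>cell_box N. grid_delta m f j * cnj (grid_delta k g j))
       = (\<Sum>j\<in>cell_box N. grid_delta k f j * cnj (grid_delta m g j))"
proof -
  have shift: "(\<Sum>j\<in>cell_box N. f (j + p) * cnj (g (j + q)))
      = (\<Sum>j\<in>cell_box N. f (j + (p - q)) * cnj (g j))" for p q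
  proof -
    have "grid_periodic N (\<lambda>j. f (j + (p - q)) * cnj (g j))"
      by (rule grid_periodic_compose2[OF grid_periodic_translate[OF f] g])
    from sum_cell_box_translate[OF this N, of q] show ?thesis
      by (simp add: algebra_simps)
  qed
  have expand: "grid_delta m f j * cnj (grid_delta k g j) =
     f (j + axis m 1) * cnj (g (j + axis k 1)) - f (j + axis m 1) * cnj (g (j + - axis k 1))
     - f (j + - axis m 1) * cnj (g (j + axis k 1)) + f (j + - axis m 1) * cnj (g (j + - axis k 1))"
    for m k j
    by (simp add: grid_delta_def algebra_simps)
  show ?thesis
    unfolding expand sum.distrib sum_subtractf shift by (simp add: algebra_simps)
qed

lemma cmod_sub_sq_le: "(cmod (of_real a * p - of_real b * q))\<^sup>2 \<le> (a\<^sup>2 + b\<^sup>2) * ((cmod p)\<^sup>2 + (cmod q)\<^sup>2)"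
proof -
  have "cmod (of_real a * p - of_real b * q) \<le> \<bar>a\<bar> * cmod p + \<bar>b\<bar> * cmod q"
    using norm_triangle_ineq4[of "of_real a * p" "of_real b * q"] by (simp add: norm_mult)
  then have "(cmod (of_real a * p - of_real b * q))\<^sup>2 \<le> (\<bar>a\<bar> * cmod p + \<bar>b\<bar> * cmod q)\<^sup>2"
    by (simp add: power_mono)
  also have "\<dots> = (a\<^sup>2 + b\<^sup>2) * ((cmod p)\<^sup>2 + (cmod q)\<^sup>2) - (\<bar>a\<bar> * cmod q - \<bar>b\<bar> * cmod p)\<^sup>2"
    by (simp add: power2_eq_square algebra_simps)
  also have "\<dots> \<le> (a\<^sup>2 + b\<^sup>2) * ((cmod p)\<^sup>2 + (cmod q)\<^sup>2)"
    by simp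
  finally show ?thesis .
qed

lemma cmod_of_real_mult_sq: "(cmod (of_real a * z))\<^sup>2 = a\<^sup>2 * (cmod z)\<^sup>2"
  by (simp add: norm_mult power_mult_distrib)

text \<open>In the numeral types \<open>2 = (0::2)\<close> and \<open>3 = (0::3)\<close>; \<open>sum_2\<close> and \<open>sum_3\<close> enumerate
  the indices starting from 1.\<close>

lemma hermitian_maxwell1: "hermitian (maxwell1 m)"
  by (simp add: hermitian_def maxwell1_def)

lemma grid_inner_central_diff_maxwell1_le:
  assumes N: "\<forall>m. 0 < N$m" and v: "grid_periodic N v"
  shows "grid_inner N (central_diff maxwell1 c v) (central_diff maxwell1 c v)
       \<le> 4 * (\<Sum>m\<in>UNIV. (c m)\<^sup>2) * grid_inner N v v"
proof -
  note delta = sum_grid_delta_sq_le[OF grid_periodic_compose[OF v] N]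
  have "grid_inner N (central_diff maxwell1 c v) (central_diff maxwell1 c v) =
     (c 1)\<^sup>2 * ((\<Sum>j\<in>cell_box N. (cmod (grid_delta 1 (\<lambda>j. v j $ 2) j))\<^sup>2)
       + (\<Sum>j\<in>cell_box N. (cmod (grid_delta 1 (\<lambda>j. v j $ 1) j))\<^sup>2))"
    unfolding grid_inner_self_eq sum_2 central_diff_component
    by (simp add: maxwell1_def sum_2 cmod_of_real_mult_sq sum.distrib sum_distrib_left distrib_left)
  also have "\<dots> \<le> (c 1)\<^sup>2 * (4 * (\<Sum>j\<in>cell_box N. (cmod (v j $ 2))\<^sup>2)
       + 4 * (\<Sum>j\<in>cell_box N. (cmod (v j $ 1))\<^sup>2))"
    by (intro mult_left_mono add_mono delta) simp
  also have "\<dots> = 4 * (\<Sum>m\<in>UNIV. (c m)\<^sup>2) * grid_inner N v v"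
    unfolding grid_inner_self_eq sum_2 sum_1 by (simp add: sum.distrib algebra_simps)
  finally show ?thesis .
qed

lemma hermitian_maxwell2: "hermitian (maxwell2 m)"
  by (simp add: hermitian_def maxwell2_def)

lemma grid_inner_central_diff_maxwell2_le:
  assumes N: "\<forall>m. 0 < N$m" and v: "grid_periodic N v"
  shows "grid_inner N (central_diff maxwell2 c v) (central_diff maxwell2 c v)
       \<le> 4 * (\<Sum>m\<in>UNIV. (c m)\<^sup>2) * grid_inner N v v"
proof -
  note delta = sum_grid_delta_sq_le[OF grid_periodic_compose[OF v] N]
  let ?S = "\<lambda>b. (\<Sum>j\<in>cell_box N. (cmod (v j $ b))\<^sup>2)"
  let ?T = "\<lambda>m b. (\<Sum>j\<in>cell_box N. (cmod (grid_delta m (\<lambda>j. v j $ b) j))\<^sup>2)"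
  have "grid_inner N (central_diff maxwell2 c v) (central_diff maxwell2 c v) =
     (\<Sum>j\<in>cell_box N. (c 2)\<^sup>2 * (cmod (grid_delta 2 (\<lambda>j. v j $ 2) j))\<^sup>2 +
        (cmod (of_real (c 2) * grid_delta 2 (\<lambda>j. v j $ 1) j
               - of_real (c 1) * grid_delta 1 (\<lambda>j. v j $ 3) j))\<^sup>2 +
        (c 1)\<^sup>2 * (cmod (grid_delta 1 (\<lambda>j. v j $ 2) j))\<^sup>2)"
    unfolding grid_inner_self_eq sum_3 central_diff_component
    by (simp add: maxwell2_def sum_2 cmod_of_real_mult_sq)
  also have "\<dots> \<le> (\<Sum>j\<in>cell_box N. (c 2)\<^sup>2 * (cmod (grid_delta 2 (\<lambda>j. v j $ 2) j))\<^sup>2 +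
        ((c 2)\<^sup>2 + (c 1)\<^sup>2) * ((cmod (grid_delta 2 (\<lambda>j. v j $ 1) j))\<^sup>2
          + (cmod (grid_delta 1 (\<lambda>j. v j $ 3) j))\<^sup>2) +
        (c 1)\<^sup>2 * (cmod (grid_delta 1 (\<lambda>j. v j $ 2) j))\<^sup>2)"
    by (intro sum_mono add_mono cmod_sub_sq_le order_refl)
  also have "\<dots> = (c 2)\<^sup>2 * ?T 2 2 + ((c 2)\<^sup>2 + (c 1)\<^sup>2) * (?T 2 1 + ?T 1 3) + (c 1)\<^sup>2 * ?T 1 2"
    by (simp add: sum.distrib sum_distrib_left[symmetric])
  also have "\<dots> \<le> (c 2)\<^sup>2 * (4 * ?S 2) + ((c 2)\<^sup>2 + (c 1)\<^sup>2) * (4 * ?S 1 + 4 * ?S 3)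
      + (c 1)\<^sup>2 * (4 * ?S 2)"
    by (intro add_mono mult_left_mono delta) simp_all
  also have "\<dots> = 4 * (\<Sum>m\<in>UNIV. (c m)\<^sup>2) * grid_inner N v v"
    unfolding grid_inner_self_eq sum_3 sum_2 by (simp add: sum.distrib algebra_simps)
  finally show ?thesis .
qed

lemma levi_civita_antisym: "levi_civita a m b = - levi_civita b m a"
  using exhaust_3[of a] exhaust_3[of b] exhaust_3[of m] by (elim disjE; simp add: levi_civita_def)

lemma hermitian_maxwell3: "hermitian (maxwell3 m)"
  unfolding hermitian_def
proof (intro allI)
  fix i j :: "2 \<times> 3"
  obtain p x q y where ij: "i = (p, x)" "j = (q, y)" by (cases i, cases j)
  have "p = 1 \<or> p = 0" "q = 1 \<or> q = 0"
    using exhaust_2[of p] exhaust_2[of q] by auto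
  moreover have "cnj (levi_civita x m y) = levi_civita x m y"
    by (simp add: levi_civita_def)
  ultimately show "cnj (maxwell3 m $ i $ j) = maxwell3 m $ j $ i"
    unfolding ij maxwell3_def using levi_civita_antisym[of x m y] by auto
qed

definition grid_curl :: "(3 \<Rightarrow> real) \<Rightarrow> (3 \<Rightarrow> int^3 \<Rightarrow> complex) \<Rightarrow> 3 \<Rightarrow> int^3 \<Rightarrow> complex" where
  "grid_curl c F a j = (\<Sum>m\<in>UNIV. of_real (c m) * (\<Sum>b\<in>UNIV. levi_civita a m b * grid_delta m (F b) j))"

lemma sum_prod_if_fst_eq:
  "(\<Sum>k\<in>(UNIV::('a::finite \<times> 'b::finite) set). (if fst k = p then g (snd k) else 0) * x k)
     = (\<Sum>b\<in>UNIV. g b * x (p, b) :: complex)"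
proof -
  have "(\<Sum>k\<in>(UNIV::('a \<times> 'b) set). (if fst k = p then g (snd k) else 0) * x k)
      = (\<Sum>q\<in>UNIV. \<Sum>b\<in>UNIV. (if q = p then g b else 0) * x (q, b))"
    unfolding UNIV_Times_UNIV[symmetric] sum.cartesian_product
    by (rule sum.cong) (auto split: prod.splits)
  also have "\<dots> = (\<Sum>q\<in>UNIV. if q = p then (\<Sum>b\<in>UNIV. g b * x (p, b)) else 0)"
    by (rule sum.cong) auto
  finally show ?thesis by simp
qed

lemma central_diff_maxwell3_E:
  "central_diff maxwell3 c v j $ (0, a) = grid_curl c (\<lambda>b j. v j $ (1, b)) a j"
proof -
  have "maxwell3 m $ (0, a) $ k = (if fst k = 1 then levi_civita a m (snd k) else 0)" for m k
    by (simp add: maxwell3_def)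
  then show ?thesis
    unfolding central_diff_component grid_curl_def
    using sum_prod_if_fst_eq[of 1 "levi_civita a m" "\<lambda>k. grid_delta m (\<lambda>j. v j $ k) j" for m]
    by simp
qed

lemma central_diff_maxwell3_H:
  "central_diff maxwell3 c v j $ (1, a) = - grid_curl c (\<lambda>b j. v j $ (0, b)) a j"
proof -
  have "maxwell3 m $ (1, a) $ k = (if fst k = 0 then - levi_civita a m (snd k) else 0)" for m k
    by (simp add: maxwell3_def)
  then show ?thesis
    unfolding central_diff_component grid_curl_def
    using sum_prod_if_fst_eq[of 0 "\<lambda>b. - levi_civita a m b" "\<lambda>k. grid_delta m (\<lambda>j. v j $ k) j" for m]
    by (simp add: sum_negf)
qed

lemma cmod_diff_power2: "(cmod (p - q))\<^sup>2 = (cmod p)\<^sup>2 + (cmod q)\<^sup>2 - 2 * Re (p * cnj q)"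
  by (simp only: cmod_power2) (simp add: power2_eq_square algebra_simps)

lemma cmod_add3_power2:
  "(cmod (p + q + r))\<^sup>2 = (cmod p)\<^sup>2 + (cmod q)\<^sup>2 + (cmod r)\<^sup>2
     + 2 * Re (p * cnj q) + 2 * Re (p * cnj r) + 2 * Re (q * cnj r)"
  by (simp only: cmod_power2) (simp add: power2_eq_square algebra_simps)

text \<open>Summation by parts turns the curl cross terms \<open>\<langle>c\<^sub>m\<delta>\<^sub>mF\<^sub>b, c\<^sub>b\<delta>\<^sub>bF\<^sub>m\<rangle>\<close> into the divergence
  cross terms \<open>\<langle>c\<^sub>b\<delta>\<^sub>bF\<^sub>b, c\<^sub>m\<delta>\<^sub>mF\<^sub>m\<rangle>\<close>, giving \<open>\<parallel>curl F\<parallel>\<^sup>2 + \<parallel>div F\<parallel>\<^sup>2 = \<Sum>\<^sub>m\<^sub>,\<^sub>b \<parallel>c\<^sub>m\<delta>\<^sub>mF\<^sub>b\<parallel>\<^sup>2\<close>.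
  Estimating the curl componentwise instead would lose a factor 2 in the CFL bound.\<close>

lemma sum_grid_curl_sq_le_sum_grid_delta_sq:
  fixes F :: "3 \<Rightarrow> int^3 \<Rightarrow> complex"
  assumes F: "\<And>b. grid_periodic N (F b)" and N: "\<forall>m. 0 < N$m"
  shows "(\<Sum>j\<in>cell_box N. \<Sum>a\<in>UNIV. (cmod (grid_curl c F a j))\<^sup>2)
       \<le> (\<Sum>m\<in>UNIV. \<Sum>b\<in>UNIV. \<Sum>j\<in>cell_box N. (cmod (of_real (c m) * grid_delta m (F b) j))\<^sup>2)"
proof -
  define g where "g m b j = of_real (c m) * grid_delta m (F b) j" for m b j
  define Q where "Q m b = (\<Sum>j\<in>cell_box N. (cmod (g m b j))\<^sup>2)" for m b
  define X where "X p q r s = (\<Sum>j\<in>cell_box N. Re (g p q j * cnj (g r s j)))" for p q r s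
  have curl: "grid_curl c F 1 j = g 2 3 j - g 3 2 j" "grid_curl c F 2 j = g 3 1 j - g 1 3 j"
    "grid_curl c F 3 j = g 1 2 j - g 2 1 j" for j
    by (simp_all add: grid_curl_def g_def sum_3 levi_civita_def)
  have swap: "X m b b m = X b b m m" for m b
  proof -
    have "(\<Sum>j\<in>cell_box N. g m b j * cnj (g b m j))
        = of_real (c m * c b) * (\<Sum>j\<in>cell_box N. grid_delta m (F b) j * cnj (grid_delta b (F m) j))"
      unfolding g_def by (simp add: sum_distrib_left algebra_simps)
    also have "\<dots> = of_real (c m * c b) * (\<Sum>j\<in>cell_box N. grid_delta b (F b) j * cnj (grid_delta m (F m) j))"
      using sum_grid_delta_swap[OF F F N] by simp
    also have "\<dots> = (\<Sum>j\<in>cell_box N. g b b j * cnj (g m m j))"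
      unfolding g_def by (simp add: sum_distrib_left algebra_simps)
    finally show ?thesis
      unfolding X_def Re_sum[symmetric] by simp
  qed
  have sym: "X p q r s = X r s p q" for p q r s
    unfolding X_def by (simp add: mult.commute)
  have "0 \<le> (\<Sum>j\<in>cell_box N. (cmod (g 1 1 j + g 2 2 j + g 3 3 j))\<^sup>2)"
    by (simp add: sum_nonneg)
  then have div: "0 \<le> Q 1 1 + Q 2 2 + Q 3 3 + 2 * X 1 1 2 2 + 2 * X 1 1 3 3 + 2 * X 2 2 3 3"
    unfolding cmod_add3_power2 Q_def X_def by (simp add: sum.distrib sum_distrib_left)
  have "(\<Sum>j\<in>cell_box N. \<Sum>a\<in>UNIV. (cmod (grid_curl c F a j))\<^sup>2)
      = Q 2 3 + Q 3 2 + Q 3 1 + Q 1 3 + Q 1 2 + Q 2 1 - 2 * X 2 3 3 2 - 2 * X 3 1 1 3 - 2 * X 1 2 2 1"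
    unfolding sum_3 curl cmod_diff_power2 Q_def X_def
    by (simp add: sum.distrib sum_subtractf sum_distrib_left)
  also have "\<dots> \<le> (\<Sum>m\<in>UNIV. \<Sum>b\<in>UNIV. Q m b)"
    unfolding sum_3 using div swap[of 2 3] swap[of 3 1] swap[of 1 2] sym[of 3 3 2 2] sym[of 2 2 1 1]
    by linarith
  finally show ?thesis
    unfolding Q_def g_def .
qed

lemma sum_grid_curl_sq_le:
  fixes F :: "3 \<Rightarrow> int^3 \<Rightarrow> complex"
  assumes F: "\<And>b. grid_periodic N (F b)" and N: "\<forall>m. 0 < N$m"
  shows "(\<Sum>j\<in>cell_box N. \<Sum>a\<in>UNIV. (cmod (grid_curl c F a j))\<^sup>2)
       \<le> 4 * (\<Sum>m\<in>UNIV. (c m)\<^sup>2) * (\<Sum>j\<in>cell_box N. \<Sum>b\<in>UNIV. (cmod (F b j))\<^sup>2)"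
proof -
  have "(\<Sum>j\<in>cell_box N. (cmod (of_real (c m) * grid_delta m (F b) j))\<^sup>2)
      \<le> (c m)\<^sup>2 * (4 * (\<Sum>j\<in>cell_box N. (cmod (F b j))\<^sup>2))" for m b
    unfolding cmod_of_real_mult_sq sum_distrib_left[symmetric]
    by (intro mult_left_mono sum_grid_delta_sq_le[OF F N]) simp
  then have "(\<Sum>j\<in>cell_box N. \<Sum>a\<in>UNIV. (cmod (grid_curl c F a j))\<^sup>2)
      \<le> (\<Sum>m\<in>UNIV. \<Sum>b\<in>UNIV. (c m)\<^sup>2 * (4 * (\<Sum>j\<in>cell_box N. (cmod (F b j))\<^sup>2)))"
    by (intro order_trans[OF sum_grid_curl_sq_le_sum_grid_delta_sq[OF F N]] sum_mono)
  also have "\<dots> = (\<Sum>m\<in>UNIV. (c m)\<^sup>2) * (\<Sum>b\<in>UNIV. 4 * (\<Sum>j\<in>cell_box N. (cmod (F b j))\<^sup>2))"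
    by (rule sum_product[symmetric])
  also have "\<dots> = 4 * (\<Sum>m\<in>UNIV. (c m)\<^sup>2) * (\<Sum>j\<in>cell_box N. \<Sum>b\<in>UNIV. (cmod (F b j))\<^sup>2)"
    by (simp add: sum_distrib_left[symmetric] sum.swap[of _ UNIV])
  finally show ?thesis .
qed

lemma grid_inner_central_diff_maxwell3_le:
  assumes N: "\<forall>m. 0 < N$m" and v: "grid_periodic N v"
  shows "grid_inner N (central_diff maxwell3 c v) (central_diff maxwell3 c v)
       \<le> 4 * (\<Sum>m\<in>UNIV. (c m)\<^sup>2) * grid_inner N v v"
proof -
  have sum_field: "(\<Sum>k\<in>UNIV. f k) = (\<Sum>a\<in>UNIV. f (0, a)) + (\<Sum>a\<in>UNIV. f (1, a))"
    for f :: "2 \<times> 3 \<Rightarrow> real"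
  proof -
    have "(\<Sum>k\<in>UNIV. f k) = (\<Sum>p\<in>UNIV. \<Sum>a\<in>UNIV. f (p, a))"
      by (simp add: sum.cartesian_product flip: UNIV_Times_UNIV)
    moreover have "(2::2) = 0" by simp
    ultimately show ?thesis
      by (metis sum_2 add.commute)
  qed
  let ?E = "\<lambda>b j. v j $ (0::2, b)" and ?H = "\<lambda>b j. v j $ (1::2, b)"
  have "grid_inner N (central_diff maxwell3 c v) (central_diff maxwell3 c v)
      = (\<Sum>j\<in>cell_box N. \<Sum>a\<in>UNIV. (cmod (grid_curl c ?H a j))\<^sup>2)
        + (\<Sum>j\<in>cell_box N. \<Sum>a\<in>UNIV. (cmod (grid_curl c ?E a j))\<^sup>2)"
    unfolding grid_inner_self_eq sum_field central_diff_maxwell3_E central_diff_maxwell3_H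
      norm_minus_cancel sum.distrib ..
  also have "\<dots> \<le> 4 * (\<Sum>m\<in>UNIV. (c m)\<^sup>2) * (\<Sum>j\<in>cell_box N. \<Sum>b\<in>UNIV. (cmod (?H b j))\<^sup>2)
      + 4 * (\<Sum>m\<in>UNIV. (c m)\<^sup>2) * (\<Sum>j\<in>cell_box N. \<Sum>b\<in>UNIV. (cmod (?E b j))\<^sup>2)"
    by (intro add_mono sum_grid_curl_sq_le[OF grid_periodic_compose[OF v] N])
  also have "\<dots> = 4 * (\<Sum>m\<in>UNIV. (c m)\<^sup>2) * grid_inner N v v"
    unfolding grid_inner_self_eq sum_field by (simp add: sum.distrib algebra_simps)
  finally show ?thesis .
qed

lemma l2_stable_bfecc_maxwell1:
  "l2_stable bfecc maxwell1 {(N, dt). (\<forall>m. 0 < N$m) \<and> 0 < dt \<and> dt \<le> sqrt 3 * mesh N 0}"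
proof (rule l2_stable_subset[OF l2_stable_bfecc_cfl[OF allI[OF hermitian_maxwell1]
      grid_inner_central_diff_maxwell1_le]], safe)
  fix N :: "nat^1" and dt :: real
  assume "\<forall>m. 0 < N$m" "0 < dt" "dt \<le> sqrt 3 * mesh N 0"
  moreover have "(1::1) = 0"
    by (simp add: num1_eq_iff)
  ultimately show "dt \<le> sqrt 3 / sqrt (\<Sum>m\<in>UNIV. (1 / mesh N m)\<^sup>2)"
    by (simp add: sum_1 mesh_def)
qed

lemma l2_stable_bfecc_maxwell2:
  "l2_stable bfecc maxwell2 {(N, dt). (\<forall>m. 0 < N$m) \<and> 0 < dt \<and>
     dt \<le> sqrt 3 / sqrt ((1 / mesh N 0)\<^sup>2 + (1 / mesh N 1)\<^sup>2)}"
proof (rule l2_stable_subset[OF l2_stable_bfecc_cfl[OF allI[OF hermitian_maxwell2]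
      grid_inner_central_diff_maxwell2_le]], safe)
  fix N :: "nat^2" and dt :: real
  assume "dt \<le> sqrt 3 / sqrt ((1 / mesh N 0)\<^sup>2 + (1 / mesh N 1)\<^sup>2)"
  moreover have "(2::2) = 0"
    by simp
  ultimately show "dt \<le> sqrt 3 / sqrt (\<Sum>m\<in>UNIV. (1 / mesh N m)\<^sup>2)"
    unfolding sum_2 by (simp only: add.commute)
qed

lemma l2_stable_bfecc_maxwell3:
  "l2_stable bfecc maxwell3 {(N, dt). (\<forall>m. 0 < N$m) \<and> 0 < dt \<and>
     dt \<le> sqrt 3 / sqrt ((1 / mesh N 0)\<^sup>2 + (1 / mesh N 1)\<^sup>2 + (1 / mesh N 2)\<^sup>2)}"
proof (rule l2_stable_subset[OF l2_stable_bfecc_cfl[OF allI[OF hermitian_maxwell3]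
      grid_inner_central_diff_maxwell3_le]], safe)
  fix N :: "nat^3" and dt :: real
  assume "dt \<le> sqrt 3 / sqrt ((1 / mesh N 0)\<^sup>2 + (1 / mesh N 1)\<^sup>2 + (1 / mesh N 2)\<^sup>2)"
  moreover have "(3::3) = 0"
    by simp
  ultimately show "dt \<le> sqrt 3 / sqrt (\<Sum>m\<in>UNIV. (1 / mesh N m)\<^sup>2)"
    unfolding sum_3 by (simp only: add.commute add.left_commute)
qed

subsection \<open>Frobenius norm estimates and the matrix exponential\<close>

lemma norm_cmatrix_vector_mult_le: "norm ((M::complex^'n::finite^'m::finite) *v x) \<le> norm M * norm x"
proof -
  have row: "cmod ((M *v x)$i) \<le> norm (M$i) * norm x" for i
  proof -
    have "cmod ((M *v x)$i) = cmod (\<Sum>j\<in>UNIV. M$i$j * x$j)"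
      by (simp add: matrix_vector_mult_def)
    also have "\<dots> \<le> (\<Sum>j\<in>UNIV. \<bar>cmod (M$i$j)\<bar> * \<bar>cmod (x$j)\<bar>)"
      by (rule order_trans[OF norm_sum]) (simp add: norm_mult)
    also have "\<dots> \<le> L2_set (\<lambda>j. cmod (M$i$j)) UNIV * L2_set (\<lambda>j. cmod (x$j)) UNIV"
      by (rule L2_set_mult_ineq)
    also have "\<dots> = norm (M$i) * norm x"
      by (simp add: norm_vec_def)
    finally show ?thesis .
  qed
  have "norm (M *v x) = L2_set (\<lambda>i. cmod ((M *v x)$i)) UNIV"
    by (simp add: norm_vec_def)
  also have "\<dots> \<le> L2_set (\<lambda>i. norm (M$i) * norm x) UNIV"
    by (rule L2_set_mono) (simp_all add: row)
  also have "\<dots> = norm M * norm x"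
    by (simp add: L2_set_left_distrib[symmetric] norm_vec_def)
  finally show ?thesis .
qed

lemma norm_cmatrix_power2:
  "(norm (M::complex^'n::finite^'m::finite))\<^sup>2 = (\<Sum>i\<in>UNIV. \<Sum>j\<in>UNIV. (cmod (M$i$j))\<^sup>2)"
  by (simp add: norm_vec_def L2_set_def sum_nonneg)

lemma norm_transpose_cmatrix: "norm (transpose (M::complex^'n::finite^'m::finite)) = norm M"
proof -
  have "(norm (transpose M))\<^sup>2 = (norm M)\<^sup>2"
    unfolding norm_cmatrix_power2 by (simp add: transpose_def) (rule sum.swap)
  then show ?thesis by (simp add: power2_eq_iff_nonneg)
qed

lemma norm_cmatrix_mult_le:
  "norm ((M::complex^'n::finite^'m::finite) ** (M'::complex^'k::finite^'n)) \<le> norm M * norm M'"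
proof -
  have row: "(M ** M')$i = transpose M' *v (M$i)" for i
    by (simp add: vec_eq_iff matrix_matrix_mult_def matrix_vector_mult_def transpose_def mult.commute)
  have "norm (M ** M') = L2_set (\<lambda>i. norm ((M ** M')$i)) UNIV"
    by (simp add: norm_vec_def)
  also have "\<dots> \<le> L2_set (\<lambda>i. norm (M$i) * norm M') UNIV"
  proof (rule L2_set_mono)
    fix i
    have "norm ((M ** M')$i) \<le> norm (transpose M') * norm (M$i)"
      unfolding row by (rule norm_cmatrix_vector_mult_le)
    then show "norm ((M ** M')$i) \<le> norm (M$i) * norm M'"
      by (simp add: norm_transpose_cmatrix mult.commute)
  qed simp
  also have "\<dots> = norm M * norm M'"
    by (simp add: L2_set_left_distrib[symmetric] norm_vec_def)
  finally show ?thesis .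
qed

lemma mpow_Suc: "mpow M (Suc n) = M ** mpow M n"
  by (simp add: mpow_def)

lemma norm_mpow_le: "norm (mpow M n) \<le> norm (mat 1 :: complex^'s::finite^'s) * norm (M::complex^'s^'s) ^ n"
proof (induction n)
  case 0
  then show ?case by (simp add: mpow_def)
next
  case (Suc n)
  have "norm (mpow M (Suc n)) \<le> norm M * norm (mpow M n)"
    unfolding mpow_Suc by (rule norm_cmatrix_mult_le)
  also have "\<dots> \<le> norm M * (norm (mat 1 :: complex^'s^'s) * norm M ^ n)"
    by (rule mult_left_mono[OF Suc]) simp
  finally show ?case by (simp add: algebra_simps)
qed

lemma mexp_taylor_remainder_le:
  fixes M :: "complex^'s::finite^'s"
  shows "norm (mexp M - (mat 1 + M + (1/2) *\<^sub>R (M ** M)))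
       \<le> norm (mat 1 :: complex^'s^'s) * norm M ^ 3 * exp (norm M)"
proof -
  define c where "c = norm (mat 1 :: complex^'s^'s)"
  define f where "f n = (1 / fact n) *\<^sub>R mpow M n" for n
  define g where "g n = c * norm M ^ 3 * (inverse (fact n) * norm M ^ n)" for n
  have f_le: "norm (f n) \<le> c * (inverse (fact n) * norm M ^ n)" for n
    using mult_left_mono[OF norm_mpow_le[of M n], of "inverse (fact n)"]
    by (simp add: f_def c_def divide_inverse algebra_simps)
  have "summable f"
    by (rule summable_comparison_test'[OF summable_mult[OF summable_exp] f_le])
  then have split: "mexp M = (\<Sum>n. f (n + 3)) + (\<Sum>i<3. f i)"
    unfolding mexp_def f_def[symmetric] by (rule suminf_split_initial_segment)
  have init: "(\<Sum>i<3. f i) = mat 1 + M + (1/2) *\<^sub>R (M ** M)"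
  proof -
    have "mpow M 0 = mat 1" "mpow M (Suc 0) = M" "mpow M (Suc (Suc 0)) = M ** M"
      by (simp_all add: mpow_Suc) (simp_all add: mpow_def matrix_mul_rid)
    moreover have "(\<Sum>i<3. f i) = f 0 + f (Suc 0) + f (Suc (Suc 0))"
      by (simp add: numeral_3_eq_3)
    ultimately show ?thesis by (simp add: f_def)
  qed
  have tail_le: "norm (f (n + 3)) \<le> g n" for n
  proof -
    have "inverse (fact (n + 3)) \<le> (inverse (fact n) :: real)"
      by (intro le_imp_inverse_le) (auto intro: fact_mono)
    then have "c * (inverse (fact (n + 3)) * norm M ^ (n + 3)) \<le> c * (inverse (fact n) * norm M ^ (n + 3))"
      unfolding c_def by (intro mult_left_mono mult_right_mono) auto
    then show ?thesis
      using f_le[of "n + 3"] by (simp add: g_def power_add algebra_simps)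
  qed
  have "norm (mexp M - (mat 1 + M + (1/2) *\<^sub>R (M ** M))) = norm (\<Sum>n. f (n + 3))"
    unfolding split init by simp
  also have "\<dots> \<le> (\<Sum>n. g n)"
    by (rule norm_suminf_le[OF tail_le]) (simp add: g_def summable_mult summable_exp)
  also have "\<dots> = c * norm M ^ 3 * (\<Sum>n. inverse (fact n) * norm M ^ n)"
    unfolding g_def by (rule suminf_mult[OF summable_exp])
  also have "\<dots> = c * norm M ^ 3 * exp (norm M)"
    using sums_unique[OF exp_converges[of "norm M"]] by (simp add: divide_inverse mult.commute)
  finally show ?thesis
    unfolding c_def .
qed

lemma norm_smult_cvec: "norm (c *s (x::complex^'n::finite)) = cmod c * norm x"
  by (simp add: norm_vec_def norm_mult L2_set_right_distrib)

lemma cmatrix_vector_mult_smult: "(M::complex^'n::finite^'m::finite) *v (c *s w) = c *s (M *v w)"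
  by (simp add: vec_eq_iff matrix_vector_mult_def sum_distrib_left algebra_simps)

lemma scaleR_cmatrix_vector_mult: "(r *\<^sub>R (M::complex^'n::finite^'m::finite)) *v w = r *\<^sub>R (M *v w)"
  by (simp add: vec_eq_iff matrix_vector_mult_def scaleR_sum_right)

lemma sum_cmatrix_vector_mult:
  "finite I \<Longrightarrow> (\<Sum>m\<in>I. F m) *v (w::complex^'n::finite) = (\<Sum>m\<in>I. F m *v w)"
  by (induction I rule: finite_induct) (simp_all add: matrix_vector_mult_add_rdistrib)

lemma cvec_scale_eq_smult: "cvec_scale c v = c *s v"
  by (simp add: cvec_scale_def vec_eq_iff)

lemma cmat_scale_mult_vec: "cmat_scale c X *v u = c *s (X *v u)"
  by (simp add: cmat_scale_def vec_eq_iff matrix_vector_mult_def sum_distrib_left algebra_simps)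

lemma norm_cmat_scale: "norm (cmat_scale c (X::complex^'n::finite^'n)) = cmod c * norm X"
proof -
  have "(cmat_scale c X)$a = c *s (X$a)" for a
    by (simp add: cmat_scale_def vec_eq_iff)
  then show ?thesis
    by (simp add: norm_vec_def[of "cmat_scale c X"] norm_vec_def[of X] norm_smult_cvec
        L2_set_right_distrib)
qed

lemma mexp_i_taylor_remainder_le:
  fixes T :: "complex^'s::finite^'s"
  shows "norm (mexp (cmat_scale \<i> T) *v v - (v + \<i> *s (T *v v) - (1/2) *\<^sub>R (T *v (T *v v))))
       \<le> norm (mat 1 :: complex^'s^'s) * norm T ^ 3 * exp (norm T) * norm v"
proof -
  define M where "M = cmat_scale \<i> T"
  have "(mat 1 + M + (1/2) *\<^sub>R (M ** M)) *v v = v + \<i> *s (T *v v) - (1/2) *\<^sub>R (T *v (T *v v))"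
    by (simp add: M_def matrix_vector_mult_add_rdistrib scaleR_cmatrix_vector_mult cmat_scale_mult_vec
        cmatrix_vector_mult_smult vector_smult_assoc flip: matrix_vector_mul_assoc)
  then have "norm (mexp M *v v - (v + \<i> *s (T *v v) - (1/2) *\<^sub>R (T *v (T *v v))))
      = norm ((mexp M - (mat 1 + M + (1/2) *\<^sub>R (M ** M))) *v v)"
    by (simp add: matrix_vector_mult_diff_rdistrib)
  also have "\<dots> \<le> norm (mat 1 :: complex^'s^'s) * norm M ^ 3 * exp (norm M) * norm v"
    by (rule order_trans[OF norm_cmatrix_vector_mult_le mult_right_mono[OF mexp_taylor_remainder_le]]) simp
  finally show ?thesis
    by (simp add: M_def norm_cmat_scale)
qed

subsection \<open>Fourier symbols\<close>

definition wave_phase :: "real \<Rightarrow> real^'d::finite \<Rightarrow> int^'d \<Rightarrow> complex" where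
  "wave_phase h k j = exp (2 * pi * \<i> * of_real (\<Sum>m\<in>UNIV. k$m * h * of_int (j$m)))"

lemma plane_wave_eq_wave_phase: "plane_wave h k v = (\<lambda>j. wave_phase h k j *s v)"
  by (simp add: plane_wave_def wave_phase_def cvec_scale_eq_smult)

lemma wave_phase_translate:
  "wave_phase h k (j + axis m 1) = wave_phase h k j * exp (\<i> * of_real (2 * pi * k$m * h))"
  "wave_phase h k (j - axis m 1) = wave_phase h k j * exp (- (\<i> * of_real (2 * pi * k$m * h)))"
proof -
  have axis: "(\<Sum>m'\<in>UNIV. h * (k$m' * (if m' = m then 1 else 0))) = h * k$m"
    by (subst sum.cong[OF refl, of _ _ "\<lambda>m'. if m' = m then h * k$m else 0"]) auto
  have plus: "(\<Sum>m'\<in>UNIV. k$m' * h * of_int ((j + axis m 1)$m'))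
      = (\<Sum>m'\<in>UNIV. k$m' * h * of_int (j$m')) + k$m * h"
    using axis by (simp add: axis_def algebra_simps sum.distrib if_distrib[of real_of_int] cong: if_cong)
  have minus: "(\<Sum>m'\<in>UNIV. k$m' * h * of_int ((j - axis m 1)$m'))
      = (\<Sum>m'\<in>UNIV. k$m' * h * of_int (j$m')) - k$m * h"
    using axis by (simp add: axis_def algebra_simps sum_subtractf if_distrib[of real_of_int] cong: if_cong)
  show "wave_phase h k (j + axis m 1) = wave_phase h k j * exp (\<i> * of_real (2 * pi * k$m * h))"
    unfolding wave_phase_def plus by (simp add: exp_add[symmetric] algebra_simps)
  show "wave_phase h k (j - axis m 1) = wave_phase h k j * exp (- (\<i> * of_real (2 * pi * k$m * h)))"
    unfolding wave_phase_def minus by (simp add: exp_add[symmetric] exp_diff algebra_simps)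
qed

definition sine_symbol ::
  "('d::finite \<Rightarrow> complex^'s::finite^'s) \<Rightarrow> real \<Rightarrow> real \<Rightarrow> real^'d \<Rightarrow> complex^'s^'s" where
  "sine_symbol A \<nu> h k = (\<Sum>m\<in>UNIV. (\<nu> * sin (2 * pi * k$m * h)) *\<^sub>R A m)"

definition angle_symbol ::
  "('d::finite \<Rightarrow> complex^'s::finite^'s) \<Rightarrow> real \<Rightarrow> real \<Rightarrow> real^'d \<Rightarrow> complex^'s^'s" where
  "angle_symbol A \<nu> h k = (\<Sum>m\<in>UNIV. (\<nu> * (2 * pi * k$m * h)) *\<^sub>R A m)"

lemma central_plane_wave:
  assumes "h \<noteq> 0"
  shows "central A (\<nu> * h) (\<lambda>m. h) (\<lambda>j. wave_phase h k j *s w) j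
       = wave_phase h k j *s (w + \<i> *s (sine_symbol A \<nu> h k *v w))"
proof -
  have "exp (\<i> * of_real t) - exp (- (\<i> * of_real t)) = 2 * \<i> * of_real (sin t)" for t
  proof -
    have "exp (\<i> * of_real t) = cis t" "exp (- (\<i> * of_real t)) = cis (- t)"
      by (simp_all add: cis_conv_exp)
    then show ?thesis by (simp add: complex_eq_iff)
  qed
  then have diff: "wave_phase h k (j + axis m 1) *s w - wave_phase h k (j - axis m 1) *s w
      = (wave_phase h k j * (2 * \<i> * of_real (sin (2 * pi * k$m * h)))) *s w" for m
    unfolding wave_phase_translate by (metis right_diff_distrib vector_sub_rdistrib)
  have "central A (\<nu> * h) (\<lambda>m. h) (\<lambda>j. wave_phase h k j *s w) j
      = wave_phase h k j *s w + (\<Sum>m\<in>UNIV. (\<nu> / 2) *\<^sub>R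
          ((wave_phase h k j * (2 * \<i> * of_real (sin (2 * pi * k$m * h)))) *s (A m *v w)))"
    unfolding central_def using assms by (simp add: diff cmatrix_vector_mult_smult)
  also have "\<dots> = wave_phase h k j *s (w + \<i> *s (sine_symbol A \<nu> h k *v w))"
    unfolding sine_symbol_def sum_cmatrix_vector_mult[OF finite] scaleR_cmatrix_vector_mult
    by (simp add: vec_eq_iff sum_component del: scaleR_conv_of_real)
       (simp add: scaleR_conv_of_real sum_distrib_left algebra_simps)
  finally show ?thesis .
qed

text \<open>The symbol of BFECC is \<open>(I + iS)(I - S\<^sup>2/2)\<close>, where \<open>iS\<close> is the symbol of \<open>D\<close>.\<close>

lemma bfecc_plane_wave:
  fixes A :: "'d::finite \<Rightarrow> complex^'s::finite^'s" and k :: "real^'d" and \<nu> :: real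
  assumes h: "h \<noteq> 0"
  defines "S \<equiv> sine_symbol A \<nu> h k"
  shows "bfecc A (\<nu> * h) (\<lambda>m. h) (plane_wave h k v) 0
     = v + \<i> *s (S *v v) - (1/2) *\<^sub>R (S *v (S *v v)) - (1/2) *\<^sub>R (\<i> *s (S *v (S *v (S *v v))))"
proof -
  define w1 where "w1 = v + \<i> *s (S *v v)"
  define w0 where "w0 = w1 - \<i> *s (S *v w1)"
  define w2 where "w2 = v + (1/2) *\<^sub>R (v - w0)"
  have reversed: "sine_symbol (\<lambda>m. - A m) \<nu> h k = - S"
    by (simp add: S_def sine_symbol_def sum_negf)
  have forward_step: "central A (\<nu> * h) (\<lambda>m. h) (plane_wave h k v) = (\<lambda>j. wave_phase h k j *s w1)"
    unfolding plane_wave_eq_wave_phase w1_def S_def by (rule ext, rule central_plane_wave[OF h])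
  have backward_step: "central_backward A (\<nu> * h) (\<lambda>m. h) (\<lambda>j. wave_phase h k j *s w1)
      = (\<lambda>j. wave_phase h k j *s w0)"
    unfolding central_backward_def w0_def
    by (rule ext, subst central_plane_wave[OF h]) (simp add: reversed uminus_cmatrix_vector_mult)
  have corrected: "(\<lambda>j. plane_wave h k v j + (1/2) *\<^sub>R (plane_wave h k v j - wave_phase h k j *s w0))
      = (\<lambda>j. wave_phase h k j *s w2)"
    unfolding plane_wave_eq_wave_phase w2_def
    by (rule ext) (simp add: vec_eq_iff del: scaleR_conv_of_real; simp add: scaleR_conv_of_real algebra_simps)
  have "wave_phase h k 0 = 1"
    by (simp add: wave_phase_def)
  then have "bfecc A (\<nu> * h) (\<lambda>m. h) (plane_wave h k v) 0 = w2 + \<i> *s (S *v w2)"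
    unfolding bfecc_def Let_def forward_step backward_step corrected central_plane_wave[OF h] S_def by simp
  also have "\<dots> = v + \<i> *s (S *v v) - (1/2) *\<^sub>R (S *v (S *v v)) - (1/2) *\<^sub>R (\<i> *s (S *v (S *v (S *v v))))"
    unfolding w2_def w0_def w1_def
    by (simp add: matrix_vector_right_distrib matrix_vector_mult_diff_distrib cmatrix_vector_mult_smult
        cmatrix_vector_mult_scaleR)
       (simp add: vec_eq_iff del: scaleR_conv_of_real; simp add: scaleR_conv_of_real algebra_simps)
  finally show ?thesis .
qed

lemma exact_symbol_scaled:
  "cmat_scale (of_real (\<nu> * h)) (exact_symbol A k) = cmat_scale \<i> (angle_symbol A \<nu> h k)"
  by (simp add: vec_eq_iff cmat_scale_def exact_symbol_def angle_symbol_def sum_component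
      del: scaleR_conv_of_real)
     (simp add: scaleR_conv_of_real sum_distrib_left algebra_simps)

lemma abs_sin_sub_le: "\<bar>sin x - x\<bar> \<le> \<bar>x\<bar> ^ 3 / 6" for x :: real
proof -
  have "(\<Sum>m<Suc (Suc (Suc 0)). sin_coeff m * x ^ m) = x"
    by (simp add: sin_coeff_def)
  moreover have "(fact (Suc (Suc (Suc 0))) :: real) = 6"
    by (simp add: fact_Suc)
  ultimately have "\<bar>sin x - x\<bar> \<le> inverse 6 * \<bar>x\<bar> ^ 3"
    using Maclaurin_sin_bound[of x "Suc (Suc (Suc 0))"] by (simp add: numeral_3_eq_3)
  then show ?thesis
    by simp
qed

lemma norm_sum_scaleR_le:
  fixes A :: "'d::finite \<Rightarrow> 'a::real_normed_vector"
  assumes "\<And>m. \<bar>r m\<bar> \<le> b"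
  shows "norm (\<Sum>m\<in>UNIV. r m *\<^sub>R A m) \<le> b * (\<Sum>m\<in>UNIV. norm (A m))"
proof -
  have "norm (\<Sum>m\<in>UNIV. r m *\<^sub>R A m) \<le> (\<Sum>m\<in>UNIV. \<bar>r m\<bar> * norm (A m))"
    by (rule order_trans[OF norm_sum]) simp
  also have "\<dots> \<le> (\<Sum>m\<in>UNIV. b * norm (A m))"
    by (intro sum_mono mult_right_mono assms) simp
  finally show ?thesis by (simp add: sum_distrib_left)
qed

lemma bfecc_symbol_sub_taylor_eq:
  fixes S T :: "complex^'s::finite^'s"
  shows "(v + \<i> *s (S *v v) - (1/2) *\<^sub>R (S *v (S *v v)) - (1/2) *\<^sub>R (\<i> *s (S *v (S *v (S *v v)))))
             - (v + \<i> *s (T *v v) - (1/2) *\<^sub>R (T *v (T *v v)))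
       = \<i> *s ((S - T) *v v) - (1/2) *\<^sub>R (S *v ((S - T) *v v) + (S - T) *v (T *v v))
         - (1/2) *\<^sub>R (\<i> *s (S *v (S *v (S *v v))))"
  by (simp add: matrix_vector_mult_diff_rdistrib matrix_vector_mult_diff_distrib vector_ssub_ldistrib
      algebra_simps)

lemma bfecc_symbol_taylor_diff_le:
  fixes S T :: "complex^'s::finite^'s"
  assumes S: "norm S \<le> a * \<rho>" and T: "norm T \<le> a * \<rho>" and ST: "norm (S - T) \<le> B * \<rho> ^ 3"
    and a: "0 \<le> a" and \<rho>: "0 \<le> \<rho>" "\<rho> \<le> 1"
  shows "norm ((v + \<i> *s (S *v v) - (1/2) *\<^sub>R (S *v (S *v v)) - (1/2) *\<^sub>R (\<i> *s (S *v (S *v (S *v v)))))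
             - (v + \<i> *s (T *v v) - (1/2) *\<^sub>R (T *v (T *v v))))
       \<le> (B + a * B + a ^ 3 / 2) * \<rho> ^ 3 * norm v"
proof -
  note mv = norm_cmatrix_vector_mult_le
  define e where "e = B * \<rho> ^ 3"
  have e: "0 \<le> e"
    using ST norm_ge_zero order_trans unfolding e_def by blast
  have shrink: "a * \<rho> * x \<le> a * x" if "0 \<le> x" for x
    using mult_right_mono[OF \<rho>(2), of "a * x"] a that by (simp add: algebra_simps)
  have STv: "norm ((S - T) *v v) \<le> e * norm v"
    unfolding e_def using order_trans[OF mv mult_right_mono[OF ST norm_ge_zero]] .
  have Tv: "norm (T *v v) \<le> a * \<rho> * norm v"
    using order_trans[OF mv mult_right_mono[OF T norm_ge_zero]] .
  have S_STv: "norm (S *v ((S - T) *v v)) \<le> a * (e * norm v)"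
  proof -
    have "norm (S *v ((S - T) *v v)) \<le> a * \<rho> * (e * norm v)"
      by (rule order_trans[OF mv mult_mono[OF S STv]]) (use a \<rho> in auto)
    then show ?thesis using shrink[of "e * norm v"] e by simp
  qed
  have ST_Tv: "norm ((S - T) *v (T *v v)) \<le> a * (e * norm v)"
  proof -
    have "norm ((S - T) *v (T *v v)) \<le> e * (a * \<rho> * norm v)"
      by (rule order_trans[OF mv mult_mono[OF ST[folded e_def] Tv]]) (use e in auto)
    then show ?thesis using shrink[of "e * norm v"] e by (simp add: algebra_simps)
  qed
  have S3v: "norm (\<i> *s (S *v (S *v (S *v v)))) \<le> a ^ 3 * \<rho> ^ 3 * norm v"
  proof -
    have "norm (S *v (S *v (S *v v))) \<le> norm S * (norm S * (norm S * norm v))"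
      by (intro order_trans[OF mv] mult_left_mono) simp_all
    also have "\<dots> \<le> (a * \<rho>) * ((a * \<rho>) * ((a * \<rho>) * norm v))"
      by (intro mult_mono S mult_nonneg_nonneg order_refl) (simp_all add: a \<rho>)
    finally show ?thesis
      by (simp add: norm_smult_cvec power3_eq_cube algebra_simps)
  qed
  have "norm (\<i> *s ((S - T) *v v) - (1/2) *\<^sub>R (S *v ((S - T) *v v) + (S - T) *v (T *v v))
        - (1/2) *\<^sub>R (\<i> *s (S *v (S *v (S *v v)))))
      \<le> norm (\<i> *s ((S - T) *v v))
      + (1/2) * (norm (S *v ((S - T) *v v)) + norm ((S - T) *v (T *v v)))
      + (1/2) * norm (\<i> *s (S *v (S *v (S *v v))))"
    by (intro norm_triangle_le_diff add_mono order_refl) (simp_all add: norm_triangle_ineq)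
  also have "\<dots> \<le> (B + a * B + a ^ 3 / 2) * \<rho> ^ 3 * norm v"
    using STv S_STv ST_Tv S3v unfolding norm_smult_cvec by (simp add: e_def algebra_simps)
  finally show ?thesis
    unfolding bfecc_symbol_sub_taylor_eq .
qed

lemma norm_sine_angle_symbol_le:
  fixes A :: "'d::finite \<Rightarrow> complex^'s::finite^'s" and h :: real and k :: "real^'d"
  assumes \<nu>: "0 \<le> \<nu>"
  defines "K \<equiv> (\<Sum>m\<in>UNIV. norm (A m))" and "\<rho> \<equiv> norm (h *\<^sub>R k)"
  shows "norm (sine_symbol A \<nu> h k) \<le> 2 * pi * \<nu> * K * \<rho>"
    and "norm (angle_symbol A \<nu> h k) \<le> 2 * pi * \<nu> * K * \<rho>"
    and "norm (sine_symbol A \<nu> h k - angle_symbol A \<nu> h k) \<le> \<nu> * (2 * pi) ^ 3 / 6 * K * \<rho> ^ 3"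
proof -
  define \<theta> where "\<theta> m = 2 * pi * k$m * h" for m
  have \<theta>: "\<bar>\<theta> m\<bar> \<le> 2 * pi * \<rho>" for m
    using component_le_norm_cart[of "h *\<^sub>R k" m] by (simp add: \<theta>_def \<rho>_def abs_mult mult.commute)
  have \<nu>\<theta>: "\<bar>\<nu> * \<theta> m\<bar> \<le> \<nu> * (2 * pi * \<rho>)" for m
    using mult_left_mono[OF \<theta>[of m] \<nu>] \<nu> by (simp add: abs_mult)
  have \<nu>sin: "\<bar>\<nu> * sin (\<theta> m)\<bar> \<le> \<nu> * (2 * pi * \<rho>)" for m
    using mult_left_mono[OF abs_sin_x_le_abs_x[of "\<theta> m"] \<nu>] \<nu>\<theta>[of m] \<nu> by (simp add: abs_mult)
  have "norm (sine_symbol A \<nu> h k) \<le> \<nu> * (2 * pi * \<rho>) * K"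
    unfolding sine_symbol_def K_def \<theta>_def[symmetric] by (rule norm_sum_scaleR_le[OF \<nu>sin])
  then show "norm (sine_symbol A \<nu> h k) \<le> 2 * pi * \<nu> * K * \<rho>"
    by (simp add: algebra_simps)
  have "norm (angle_symbol A \<nu> h k) \<le> \<nu> * (2 * pi * \<rho>) * K"
    unfolding angle_symbol_def K_def \<theta>_def[symmetric] by (rule norm_sum_scaleR_le[OF \<nu>\<theta>])
  then show "norm (angle_symbol A \<nu> h k) \<le> 2 * pi * \<nu> * K * \<rho>"
    by (simp add: algebra_simps)
  have sin3: "\<bar>sin (\<theta> m) - \<theta> m\<bar> \<le> (2 * pi * \<rho>) ^ 3 / 6" for m
    using abs_sin_sub_le[of "\<theta> m"] power_mono[OF \<theta>[of m], of 3] by simp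
  have "\<bar>\<nu> * (sin (\<theta> m) - \<theta> m)\<bar> \<le> \<nu> * ((2 * pi * \<rho>) ^ 3 / 6)" for m
    using mult_left_mono[OF sin3[of m] \<nu>] \<nu> by (simp only: abs_mult abs_of_nonneg)
  then have "norm (\<Sum>m\<in>UNIV. (\<nu> * (sin (\<theta> m) - \<theta> m)) *\<^sub>R A m) \<le> \<nu> * ((2 * pi * \<rho>) ^ 3 / 6) * K"
    unfolding K_def by (rule norm_sum_scaleR_le)
  moreover have "sine_symbol A \<nu> h k - angle_symbol A \<nu> h k
      = (\<Sum>m\<in>UNIV. (\<nu> * (sin (\<theta> m) - \<theta> m)) *\<^sub>R A m)"
    by (simp add: sine_symbol_def angle_symbol_def \<theta>_def sum_subtractf[symmetric] algebra_simps)
  ultimately show "norm (sine_symbol A \<nu> h k - angle_symbol A \<nu> h k) \<le> \<nu> * (2 * pi) ^ 3 / 6 * K * \<rho> ^ 3"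
    by (simp add: power_mult_distrib algebra_simps)
qed

definition bfecc_error_constant :: "('d::finite \<Rightarrow> complex^'s::finite^'s) \<Rightarrow> real \<Rightarrow> real" where
  "bfecc_error_constant A \<nu> =
    (let a = 2 * pi * \<nu> * (\<Sum>m\<in>UNIV. norm (A m)); B = \<nu> * (2 * pi) ^ 3 / 6 * (\<Sum>m\<in>UNIV. norm (A m))
     in B + a * B + a ^ 3 / 2 + norm (mat 1 :: complex^'s^'s) * a ^ 3 * exp a)"

lemma norm_bfecc_plane_wave_error_le:
  fixes A :: "'d::finite \<Rightarrow> complex^'s::finite^'s"
  assumes \<nu>: "0 \<le> \<nu>" and h: "0 < h" and hk: "norm (h *\<^sub>R k) \<le> 1"
  shows "norm (bfecc A (\<nu> * h) (\<lambda>m. h) (plane_wave h k v) 0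
            - mexp (cmat_scale (of_real (\<nu> * h)) (exact_symbol A k)) *v v)
       \<le> bfecc_error_constant A \<nu> * norm (h *\<^sub>R k) ^ 3 * norm v"
proof -
  define a where "a = 2 * pi * \<nu> * (\<Sum>m\<in>UNIV. norm (A m))"
  define B where "B = \<nu> * (2 * pi) ^ 3 / 6 * (\<Sum>m\<in>UNIV. norm (A m))"
  define c0 where "c0 = norm (mat 1 :: complex^'s^'s)"
  define \<rho> where "\<rho> = norm (h *\<^sub>R k)"
  define S where "S = sine_symbol A \<nu> h k"
  define T where "T = angle_symbol A \<nu> h k"
  have \<rho>: "0 \<le> \<rho>" "\<rho> \<le> 1"
    using hk by (simp_all add: \<rho>_def)
  have a: "0 \<le> a"
    using \<nu> by (simp add: a_def sum_nonneg)
  note bounds = norm_sine_angle_symbol_le[OF \<nu>, of A h k, folded a_def B_def \<rho>_def S_def T_def]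
  have "norm ((v + \<i> *s (T *v v) - (1/2) *\<^sub>R (T *v (T *v v))) - mexp (cmat_scale \<i> T) *v v)
      \<le> c0 * norm T ^ 3 * exp (norm T) * norm v"
    unfolding c0_def by (subst norm_minus_commute) (rule mexp_i_taylor_remainder_le)
  also have "\<dots> \<le> c0 * (a * \<rho>) ^ 3 * exp a * norm v"
    using bounds(2) mult_left_le[OF \<rho>(2) a]
    by (intro mult_right_mono mult_mono mult_left_mono power_mono) (simp_all add: c0_def a \<rho>)
  finally have taylor: "norm ((v + \<i> *s (T *v v) - (1/2) *\<^sub>R (T *v (T *v v))) - mexp (cmat_scale \<i> T) *v v)
      \<le> c0 * a ^ 3 * exp a * \<rho> ^ 3 * norm v"
    by (simp add: power_mult_distrib algebra_simps)
  have "norm (bfecc A (\<nu> * h) (\<lambda>m. h) (plane_wave h k v) 0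
        - mexp (cmat_scale (of_real (\<nu> * h)) (exact_symbol A k)) *v v)
      \<le> (B + a * B + a ^ 3 / 2) * \<rho> ^ 3 * norm v + c0 * a ^ 3 * exp a * \<rho> ^ 3 * norm v"
    unfolding bfecc_plane_wave[OF h[THEN less_imp_neq, symmetric]] exact_symbol_scaled
      T_def[symmetric] S_def[symmetric]
    by (rule norm_diff_triangle_le[OF bfecc_symbol_taylor_diff_le[OF bounds a \<rho>] taylor])
  then show ?thesis
    by (simp add: bfecc_error_constant_def a_def B_def c0_def \<rho>_def distrib_right Let_def)
qed

theorem fourier_accurate_bfecc:
  fixes A :: "'d::finite \<Rightarrow> complex^'s::finite^'s"
  shows "fourier_accurate 2 bfecc A"
  unfolding fourier_accurate_def
  apply (intro allI impI)
  subgoal for \<nu>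
    apply (rule exI[of _ "bfecc_error_constant A \<nu>"], rule exI[of _ 1])
    using norm_bfecc_plane_wave_error_le[of \<nu> _ _ A] by simp
  done

theorem theorem3p1:
  shows "fourier_accurate 2 bfecc maxwell1 \<and>
         fourier_accurate 2 bfecc maxwell2 \<and>
         fourier_accurate 2 bfecc maxwell3 \<and>
         l2_stable bfecc maxwell1
           {(N, dt). (\<forall>m. 0 < N$m) \<and> 0 < dt \<and> dt \<le> sqrt 3 * mesh N 0} \<and>
         l2_stable bfecc maxwell2
           {(N, dt). (\<forall>m. 0 < N$m) \<and> 0 < dt \<and>
              dt \<le> sqrt 3 / sqrt ((1 / mesh N 0)\<^sup>2 + (1 / mesh N 1)\<^sup>2)} \<and>
         l2_stable bfecc maxwell3
           {(N, dt). (\<forall>m. 0 < N$m) \<and> 0 < dt \<and>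
              dt \<le> sqrt 3 / sqrt ((1 / mesh N 0)\<^sup>2 + (1 / mesh N 1)\<^sup>2 + (1 / mesh N 2)\<^sup>2)}"
  by (intro conjI fourier_accurate_bfecc l2_stable_bfecc_maxwell1 l2_stable_bfecc_maxwell2
      l2_stable_bfecc_maxwell3)

end
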